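(* For every $\epsilon_1,\epsilon_2>0$ there exists $\delta>0$ such that every $(d-1)$-dimensional simplicial complex $\Gamma$ with $n$ vertices satisfying $\mathrm{gr}_1(\Gamma)>4$ and $d<\delta n$ contains at most $\epsilon_1 n$ vertices of degree at least $\epsilon_2 n$.
   Context: A simplicial complex $\Gamma$ on a finite vertex set $V=V(\Gamma)$ is a family of subsets of $V$ (faces) closed under taking subsets; its dimension is $\max\{|F|:F\in\Gamma\}-1$. The degree of a vertex $v$ is the number of 2-element faces (edges) containing $v$. For $W\subseteq V$, $\Gamma[W]=\{F\in\Gamma:F\subseteq W\}$. For a face $F$ (possibly empty), $\mathrm{lk}_\Gamma(F)=\{G\setminus F: F\subseteq G\in\Gamma\}$. Fix a field $\mathbf{k}$; $\tilde H_i(\cdot;\mathbf{k})$ is reduced simplicial homology. The $1$-girth is $\mathrm{gr}_{1}(\Gamma)=\min\{|W|: W\subseteq V(\Gamma),\ \tilde H_{1}(\mathrm{lk}_\Gamma(F)[W];\mathbf{k})\neq 0 \text{ for some face } F\in\Gamma \text{ (including } F=\emptyset)\}$, or $\infty$ if none exists. *)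

theory Defs
  imports Main "HOL-Library.Extended_Nat"
begin

definition simplicial_complex :: "nat set set \<Rightarrow> bool" where
  "simplicial_complex \<Gamma> \<longleftrightarrow> \<Gamma> \<noteq> {} \<and> finite \<Gamma> \<and> (\<forall>F\<in>\<Gamma>. finite F)
     \<and> (\<forall>F\<in>\<Gamma>. \<forall>G. G \<subseteq> F \<longrightarrow> G \<in> \<Gamma>)"

definition vertices :: "nat set set \<Rightarrow> nat set" where
  "vertices \<Gamma> = \<Union>\<Gamma>"

(* dimension + 1 = maximal face cardinality *)
definition max_face_card :: "nat set set \<Rightarrow> nat" where
  "max_face_card \<Gamma> = Max (card ` \<Gamma>)"

definition vdegree :: "nat set set \<Rightarrow> nat \<Rightarrow> nat" where
  "vdegree \<Gamma> v = card {e \<in> \<Gamma>. card e = 2 \<and> v \<in> e}"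

definition induced :: "nat set set \<Rightarrow> nat set \<Rightarrow> nat set set" where
  "induced \<Gamma> W = {F \<in> \<Gamma>. F \<subseteq> W}"

definition link :: "nat set set \<Rightarrow> nat set \<Rightarrow> nat set set" where
  "link \<Gamma> F = {G - F | G. F \<subseteq> G \<and> G \<in> \<Gamma>}"

(* Simplicial chains with coefficients in field 'k, using the orientation induced by
   the order on nat. A 1-chain is c a b (a < b) on the edge {a,b};
   a 2-chain is t a b x (a < b < x) on the triangle {a,b,x}. *)
definition is_1cycle :: "nat set set \<Rightarrow> (nat \<Rightarrow> nat \<Rightarrow> 'k::field) \<Rightarrow> bool" where
  "is_1cycle \<Delta> c \<longleftrightarrow> (\<forall>v.
      (\<Sum>u\<in>{u. u < v \<and> {u, v} \<in> \<Delta>}. c u v) - (\<Sum>u\<in>{u. v < u \<and> {v, u} \<in> \<Delta>}. c v u) = 0)"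

definition is_1boundary :: "nat set set \<Rightarrow> (nat \<Rightarrow> nat \<Rightarrow> 'k::field) \<Rightarrow> bool" where
  "is_1boundary \<Delta> c \<longleftrightarrow> (\<exists>t :: nat \<Rightarrow> nat \<Rightarrow> nat \<Rightarrow> 'k.
      \<forall>a b. a < b \<and> {a, b} \<in> \<Delta> \<longrightarrow>
        c a b = (\<Sum>x\<in>{x. x < a \<and> {x, a, b} \<in> \<Delta>}. t x a b)
              - (\<Sum>x\<in>{x. a < x \<and> x < b \<and> {a, x, b} \<in> \<Delta>}. t a x b)
              + (\<Sum>x\<in>{x. b < x \<and> {a, b, x} \<in> \<Delta>}. t a b x))"

definition H1_nonzero :: "'k::field itself \<Rightarrow> nat set set \<Rightarrow> bool" where
  "H1_nonzero K \<Delta> \<longleftrightarrow> (\<exists>c :: nat \<Rightarrow> nat \<Rightarrow> 'k. is_1cycle \<Delta> c \<and> \<not> is_1boundary \<Delta> c)"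

(* 1-girth; Inf {} = \<infinity> in enat *)
definition girth1 :: "'k::field itself \<Rightarrow> nat set set \<Rightarrow> enat" where
  "girth1 K \<Gamma> = (INF W \<in> {W. W \<subseteq> vertices \<Gamma> \<and>
        (\<exists>F\<in>\<Gamma>. H1_nonzero K (induced (link \<Gamma> F) W))}. enat (card W))"

end

theory Submission
  imports Defs
begin

(* The girth hypothesis gr_1 > 4 is used only through two of its combinatorial
   consequences, each obtained by exhibiting an explicit nonzero 1-cycle on at most 4 vertices
   in a complex without 2-faces:
   (1) every empty triangle in a link is filled, so the complex is flag: every clique of the
       1-skeleton is a face and hence has at most d = dim + 1 vertices;
   (2) the 1-skeleton has no induced 4-cycle, so two distinct non-adjacent vertices have a
       clique, hence at most d vertices, as common neighbourhood.
   Vertices of degree >= eps n contain no independent set of size k ~ 2/eps, since the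
   neighbourhoods of such a set would cover about 2n vertices while overlapping in at most
   k^2 d < n.  Covering a set T by a maximum independent set I, the common neighbourhoods of
   pairs from I and the private neighbourhoods (cliques) of vertices of I shows that a set
   with independence number < k has at most k + k^2 d elements.  With d < delta n this is
   at most eps1 n. *)

definition neighbours :: "nat set set \<Rightarrow> nat \<Rightarrow> nat set" where
  "neighbours \<Delta> v = {u. u \<noteq> v \<and> {u, v} \<in> \<Delta>}"

definition orientation_chain :: "(nat \<times> nat) set \<Rightarrow> nat \<Rightarrow> nat \<Rightarrow> 'k::field" where
  "orientation_chain D p q = of_bool ((p, q) \<in> D) - of_bool ((q, p) \<in> D)"

lemma orientation_chain_antisym: "orientation_chain D q p = - orientation_chain D p q"
  by (simp add: orientation_chain_def)

lemma boundary_at_vertex: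
  fixes c :: "nat \<Rightarrow> nat \<Rightarrow> 'k::field"
  assumes anti: "\<And>p q. c q p = - c p q" and fin: "finite (neighbours \<Delta> v)"
  shows "(\<Sum>u\<in>{u. u < v \<and> {u, v} \<in> \<Delta>}. c u v) - (\<Sum>u\<in>{u. v < u \<and> {v, u} \<in> \<Delta>}. c v u)
       = (\<Sum>u\<in>neighbours \<Delta> v. c u v)"
proof -
  let ?L = "{u. u < v \<and> {u, v} \<in> \<Delta>}" and ?R = "{u. v < u \<and> {v, u} \<in> \<Delta>}"
  have split: "neighbours \<Delta> v = ?L \<union> ?R"
    by (auto simp: neighbours_def insert_commute)
  have "finite ?L" "finite ?R" using fin split by auto
  then have "(\<Sum>u\<in>neighbours \<Delta> v. c u v) = (\<Sum>u\<in>?L. c u v) + (\<Sum>u\<in>?R. c u v)"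
    unfolding split by (rule sum.union_disjoint) auto
  moreover have "(\<Sum>u\<in>?R. c v u) = (\<Sum>u\<in>?R. - c u v)"
    by (rule sum.cong[OF refl]) (rule anti)
  ultimately show ?thesis by (simp add: sum_negf)
qed

lemma oriented_cycle_is_1cycle:
  fixes D :: "(nat \<times> nat) set"
  assumes fin: "finite (\<Union>\<Delta>)"
    and edges: "\<And>p q. (p, q) \<in> D \<Longrightarrow> p \<noteq> q \<and> {p, q} \<in> \<Delta>"
    and balanced: "\<And>v. card {u. (u, v) \<in> D} = card {u. (v, u) \<in> D}"
  shows "is_1cycle \<Delta> (orientation_chain D :: nat \<Rightarrow> nat \<Rightarrow> 'k::field)"
  unfolding is_1cycle_def
proof
  fix v
  let ?c = "orientation_chain D :: nat \<Rightarrow> nat \<Rightarrow> 'k"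
  have finN: "finite (neighbours \<Delta> v)"
    by (rule finite_subset[OF _ fin]) (auto simp: neighbours_def)
  have "neighbours \<Delta> v \<inter> {u. (u, v) \<in> D} = {u. (u, v) \<in> D}"
    using edges by (auto simp: neighbours_def)
  moreover have "neighbours \<Delta> v \<inter> {u. (v, u) \<in> D} = {u. (v, u) \<in> D}"
    using edges by (fastforce simp: neighbours_def insert_commute)
  ultimately have "(\<Sum>u\<in>neighbours \<Delta> v. ?c u v) = 0"
    using finN balanced[of v] by (simp add: orientation_chain_def sum_subtractf)
  then show "(\<Sum>u\<in>{u. u < v \<and> {u, v} \<in> \<Delta>}. ?c u v) - (\<Sum>u\<in>{u. v < u \<and> {v, u} \<in> \<Delta>}. ?c v u) = 0"
    using boundary_at_vertex[of ?c, OF orientation_chain_antisym finN] by simp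
qed

lemma boundary_vanishes_without_triangles:
  fixes c :: "nat \<Rightarrow> nat \<Rightarrow> 'k::field"
  assumes no_tri: "\<And>A. A \<in> \<Delta> \<Longrightarrow> card A \<noteq> 3"
    and bd: "is_1boundary \<Delta> c" and ab: "a < b" "{a, b} \<in> \<Delta>"
  shows "c a b = 0"
proof -
  have no_face: "{x, y, z} \<notin> \<Delta>" if "x \<noteq> y" "y \<noteq> z" "x \<noteq> z" for x y z
    using no_tri[of "{x, y, z}"] that by auto
  obtain t :: "nat \<Rightarrow> nat \<Rightarrow> nat \<Rightarrow> 'k" where "c a b =
        (\<Sum>x\<in>{x. x < a \<and> {x, a, b} \<in> \<Delta>}. t x a b)
      - (\<Sum>x\<in>{x. a < x \<and> x < b \<and> {a, x, b} \<in> \<Delta>}. t a x b)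
      + (\<Sum>x\<in>{x. b < x \<and> {a, b, x} \<in> \<Delta>}. t a b x)"
    using bd ab unfolding is_1boundary_def by blast
  moreover have "{x. x < a \<and> {x, a, b} \<in> \<Delta>} = {}"
    "{x. a < x \<and> x < b \<and> {a, x, b} \<in> \<Delta>} = {}" "{x. b < x \<and> {a, b, x} \<in> \<Delta>} = {}"
    using ab(1) no_face by auto
  ultimately show ?thesis by simp
qed

lemma H1_nonzero_of_oriented_cycle:
  fixes K :: "'k::field itself" and D :: "(nat \<times> nat) set"
  assumes fin: "finite (\<Union>\<Delta>)" and no_tri: "\<And>A. A \<in> \<Delta> \<Longrightarrow> card A \<noteq> 3"
    and edges: "\<And>p q. (p, q) \<in> D \<Longrightarrow> p \<noteq> q \<and> {p, q} \<in> \<Delta>"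
    and balanced: "\<And>v. card {u. (u, v) \<in> D} = card {u. (v, u) \<in> D}"
    and oriented: "(a, b) \<in> D" "(b, a) \<notin> D"
  shows "H1_nonzero K \<Delta>"
proof -
  let ?c = "orientation_chain D :: nat \<Rightarrow> nat \<Rightarrow> 'k"
  have ab: "a \<noteq> b" "{a, b} \<in> \<Delta>" "{b, a} \<in> \<Delta>"
    using edges[OF oriented(1)] by (auto simp: insert_commute)
  have "?c a b \<noteq> 0" "?c b a \<noteq> 0"
    using oriented by (simp_all add: orientation_chain_def)
  then have "\<not> is_1boundary \<Delta> ?c"
    using boundary_vanishes_without_triangles[OF no_tri] ab by (metis linorder_neqE_nat)
  with oriented_cycle_is_1cycle[OF fin edges balanced] show ?thesis
    unfolding H1_nonzero_def by blast
qed

lemma face_subset: "simplicial_complex \<Gamma> \<Longrightarrow> G \<in> \<Gamma> \<Longrightarrow> F \<subseteq> G \<Longrightarrow> F \<in> \<Gamma>"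
  unfolding simplicial_complex_def by blast

lemma empty_face: "simplicial_complex \<Gamma> \<Longrightarrow> {} \<in> \<Gamma>"
  unfolding simplicial_complex_def by blast

lemma small_links_acyclic:
  fixes K :: "'k::field itself"
  assumes girth: "girth1 K \<Gamma> > 4" and W: "W \<subseteq> vertices \<Gamma>" "card W \<le> 4" and F: "F \<in> \<Gamma>"
  shows "\<not> H1_nonzero K (induced (link \<Gamma> F) W)"
proof
  assume "H1_nonzero K (induced (link \<Gamma> F) W)"
  then have "girth1 K \<Gamma> \<le> enat (card W)"
    unfolding girth1_def using W F by (intro INF_lower) auto
  also have "\<dots> \<le> 4" using W(2) by (simp add: numeral_eq_enat)
  finally show False using girth by simp
qed

lemma induced_link_mem:
  assumes "W \<inter> F = {}"
  shows "X \<in> induced (link \<Gamma> F) W \<longleftrightarrow> X \<subseteq> W \<and> F \<union> X \<in> \<Gamma>"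
proof -
  have "X \<in> link \<Gamma> F \<longleftrightarrow> F \<union> X \<in> \<Gamma>" if "X \<inter> F = {}"
  proof
    assume "X \<in> link \<Gamma> F"
    then obtain G where "X = G - F" "F \<subseteq> G" "G \<in> \<Gamma>" unfolding link_def by blast
    then show "F \<union> X \<in> \<Gamma>" by (simp add: Un_absorb1)
  next
    assume "F \<union> X \<in> \<Gamma>"
    then show "X \<in> link \<Gamma> F"
      unfolding link_def using that by (intro CollectI exI[of _ "F \<union> X"]) auto
  qed
  then show ?thesis using assms unfolding induced_def by auto
qed

definition triangle_closed :: "nat set set \<Rightarrow> bool" where
  "triangle_closed \<Gamma> \<longleftrightarrow> (\<forall>F\<in>\<Gamma>. \<forall>a b c. distinct [a, b, c] \<and> {a, b, c} \<inter> F = {}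
      \<and> F \<union> {a, b} \<in> \<Gamma> \<and> F \<union> {b, c} \<in> \<Gamma> \<and> F \<union> {a, c} \<in> \<Gamma> \<longrightarrow> F \<union> {a, b, c} \<in> \<Gamma>)"

lemma triangle_closedD:
  assumes "triangle_closed \<Gamma>" "F \<in> \<Gamma>" "distinct [a, b, c]" "{a, b, c} \<inter> F = {}"
    "F \<union> {a, b} \<in> \<Gamma>" "F \<union> {b, c} \<in> \<Gamma>" "F \<union> {a, c} \<in> \<Gamma>"
  shows "F \<union> {a, b, c} \<in> \<Gamma>"
  using assms unfolding triangle_closed_def by blast

(* An empty triangle in a link would be a nonzero 1-cycle on 3 vertices. *)
lemma girth_triangle_closed:
  fixes K :: "'k::field itself"
  assumes girth: "girth1 K \<Gamma> > 4"
  shows "triangle_closed \<Gamma>"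
  unfolding triangle_closed_def
proof (intro ballI allI impI, elim conjE, rule ccontr)
  fix F a b c
  assume F: "F \<in> \<Gamma>" and dist: "distinct [a, b, c]" and disj: "{a, b, c} \<inter> F = {}"
    and e: "F \<union> {a, b} \<in> \<Gamma>" "F \<union> {b, c} \<in> \<Gamma>" "F \<union> {a, c} \<in> \<Gamma>"
    and unfilled: "F \<union> {a, b, c} \<notin> \<Gamma>"
  define W where "W = {a, b, c}"
  define \<Delta> where "\<Delta> = induced (link \<Gamma> F) W"
  define D where "D = {(a, b), (b, c), (c, a)}"
  have mem: "X \<in> \<Delta> \<longleftrightarrow> X \<subseteq> W \<and> F \<union> X \<in> \<Gamma>" for X
    unfolding \<Delta>_def using disj by (intro induced_link_mem) (simp add: W_def)
  have "H1_nonzero K \<Delta>"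
  proof (rule H1_nonzero_of_oriented_cycle)
    show "finite (\<Union>\<Delta>)" by (rule finite_subset[of _ W]) (auto simp: mem W_def)
    show "card A \<noteq> 3" if "A \<in> \<Delta>" for A
    proof
      assume "card A = 3"
      moreover have "A \<subseteq> W" "F \<union> A \<in> \<Gamma>" using that mem by auto
      moreover have "card W = 3" using dist by (simp add: W_def)
      ultimately have "A = W" by (intro card_subset_eq) (auto simp: W_def)
      with \<open>F \<union> A \<in> \<Gamma>\<close> unfilled show False by (simp add: W_def)
    qed
    show "p \<noteq> q \<and> {p, q} \<in> \<Delta>" if "(p, q) \<in> D" for p q
      using that dist e by (auto simp: D_def mem W_def insert_commute)
    have "{u. (u, v) \<in> D} = (if v = a then {c} else if v = b then {a} else if v = c then {b} else {})"
      "{u. (v, u) \<in> D} = (if v = a then {b} else if v = b then {c} else if v = c then {a} else {})"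
      for v using dist by (auto simp: D_def)
    then show "card {u. (u, v) \<in> D} = card {u. (v, u) \<in> D}" for v by simp
    show "(a, b) \<in> D" "(b, a) \<notin> D" using dist by (auto simp: D_def)
  qed
  moreover have "W \<subseteq> vertices \<Gamma>" using e unfolding vertices_def W_def by blast
  moreover have "card W \<le> 4" by (simp add: W_def card_insert_if)
  ultimately show False using small_links_acyclic[OF girth _ _ F] unfolding \<Delta>_def by blast
qed

(* An induced 4-cycle in the 1-skeleton would be a nonzero 1-cycle on 4 vertices. *)
lemma girth_no_induced_square:
  fixes K :: "'k::field itself"
  assumes sc: "simplicial_complex \<Gamma>" and girth: "girth1 K \<Gamma> > 4"
    and dist: "distinct [u, x, w, y]"
    and e: "{u, x} \<in> \<Gamma>" "{x, w} \<in> \<Gamma>" "{w, y} \<in> \<Gamma>" "{y, u} \<in> \<Gamma>"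
  shows "{u, w} \<in> \<Gamma> \<or> {x, y} \<in> \<Gamma>"
proof (rule ccontr)
  assume "\<not> ({u, w} \<in> \<Gamma> \<or> {x, y} \<in> \<Gamma>)"
  then have no_diag: "{u, w} \<notin> \<Gamma>" "{x, y} \<notin> \<Gamma>" by auto
  define W where "W = {u, x, w, y}"
  define \<Delta> where "\<Delta> = induced (link \<Gamma> {}) W"
  define D where "D = {(u, x), (x, w), (w, y), (y, u)}"
  have mem: "X \<in> \<Delta> \<longleftrightarrow> X \<subseteq> W \<and> X \<in> \<Gamma>" for X
    unfolding \<Delta>_def using induced_link_mem[of W "{}"] by simp
  have "H1_nonzero K \<Delta>"
  proof (rule H1_nonzero_of_oriented_cycle)
    show "finite (\<Union>\<Delta>)" by (rule finite_subset[of _ W]) (auto simp: mem W_def)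
    show "card A \<noteq> 3" if "A \<in> \<Delta>" for A
    proof -
      have "A \<subseteq> W" "A \<in> \<Gamma>" using that mem by auto
      moreover have "\<not> {u, w} \<subseteq> A" "\<not> {x, y} \<subseteq> A"
        using no_diag face_subset[OF sc \<open>A \<in> \<Gamma>\<close>] by blast+
      ultimately obtain s t where "A \<subseteq> W - {s, t}" "s \<in> {u, w}" "t \<in> {x, y}" by blast
      moreover have "card (W - {s, t}) = 2" if "s \<in> {u, w}" "t \<in> {x, y}"
        using that dist by (auto simp: W_def)
      ultimately have "card A \<le> 2"
        by (metis card_mono finite.emptyI finite.insertI finite_Diff W_def)
      then show ?thesis by simp
    qed
    show "p \<noteq> q \<and> {p, q} \<in> \<Delta>" if "(p, q) \<in> D" for p q
      using that dist e by (auto simp: D_def mem W_def insert_commute)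
    have "{p. (p, v) \<in> D} = (if v = u then {y} else if v = x then {u} else if v = w then {x}
        else if v = y then {w} else {})"
      "{p. (v, p) \<in> D} = (if v = u then {x} else if v = x then {w} else if v = w then {y}
        else if v = y then {u} else {})"
      for v using dist by (auto simp: D_def)
    then show "card {p. (p, v) \<in> D} = card {p. (v, p) \<in> D}" for v by simp
    show "(u, x) \<in> D" "(x, u) \<notin> D" using dist by (auto simp: D_def)
  qed
  moreover have "W \<subseteq> vertices \<Gamma>" using e unfolding vertices_def W_def by blast
  moreover have "card W \<le> 4" by (simp add: W_def card_insert_if)
  ultimately show False
    using small_links_acyclic[OF girth _ _ empty_face[OF sc]] unfolding \<Delta>_def by blast
qed

lemma small_clique_is_face:
  assumes sc: "simplicial_complex \<Gamma>" and C: "C \<subseteq> vertices \<Gamma>"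
    and clique: "\<And>p q. p \<in> C \<Longrightarrow> q \<in> C \<Longrightarrow> p \<noteq> q \<Longrightarrow> {p, q} \<in> \<Gamma>"
    and no_triple: "\<not> (\<exists>p q r. distinct [p, q, r] \<and> {p, q, r} \<subseteq> C)"
  shows "C \<in> \<Gamma>"
proof (cases "C = {}")
  case True
  then show ?thesis using empty_face[OF sc] by simp
next
  case False
  then obtain p where p: "p \<in> C" by blast
  show ?thesis
  proof (cases "C = {p}")
    case True
    obtain G where "G \<in> \<Gamma>" "p \<in> G" using p C unfolding vertices_def by blast
    then show ?thesis using True face_subset[OF sc] by blast
  next
    case False
    then obtain q where q: "q \<in> C" "q \<noteq> p" using p by blast
    have "r = p \<or> r = q" if "r \<in> C" for r
    proof (rule ccontr)
      assume "\<not> (r = p \<or> r = q)"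
      then have "distinct [p, q, r] \<and> {p, q, r} \<subseteq> C" using p q that by auto
      with no_triple show False by blast
    qed
    then have "C = {p, q}" using p q by blast
    then show ?thesis using clique p q by auto
  qed
qed

(* Induction on the size: dropping any one of three vertices p, q, r gives faces, and
   triangle-closedness in the link of the rest fills the triangle pqr. *)
lemma clique_is_face:
  assumes sc: "simplicial_complex \<Gamma>" and closed: "triangle_closed \<Gamma>"
    and "finite C" "C \<subseteq> vertices \<Gamma>" and "\<And>p q. p \<in> C \<Longrightarrow> q \<in> C \<Longrightarrow> p \<noteq> q \<Longrightarrow> {p, q} \<in> \<Gamma>"
  shows "C \<in> \<Gamma>"
  using assms(3-)
proof (induction "card C" arbitrary: C rule: less_induct)
  case less
  show ?case
  proof (cases "\<exists>p q r. distinct [p, q, r] \<and> {p, q, r} \<subseteq> C")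
    case True
    then obtain p q r where pqr: "distinct [p, q, r]" "{p, q, r} \<subseteq> C" by blast
    have drop_one: "C - {z} \<in> \<Gamma>" if "z \<in> C" for z
    proof (rule less.hyps)
      show "card (C - {z}) < card C" using less.prems(1) that by (rule card_Diff1_less)
    qed (use less.prems in auto)
    define F where "F = C - {p, q, r}"
    have "F \<union> {p, q} = C - {r}" "F \<union> {q, r} = C - {p}" "F \<union> {p, r} = C - {q}"
      using pqr by (auto simp: F_def)
    moreover have "C - {r} \<in> \<Gamma>" "C - {p} \<in> \<Gamma>" "C - {q} \<in> \<Gamma>"
      using drop_one pqr(2) by simp_all
    ultimately have e: "F \<union> {p, q} \<in> \<Gamma>" "F \<union> {q, r} \<in> \<Gamma>" "F \<union> {p, r} \<in> \<Gamma>"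
      by simp_all
    have "F \<in> \<Gamma>" using face_subset[OF sc e(1)] by blast
    moreover have "{p, q, r} \<inter> F = {}" by (auto simp: F_def)
    ultimately have "F \<union> {p, q, r} \<in> \<Gamma>"
      using triangle_closedD[OF closed] e pqr(1) by blast
    moreover have "F \<union> {p, q, r} = C" using pqr(2) by (auto simp: F_def)
    ultimately show ?thesis by simp
  next
    assume "\<not> (\<exists>p q r. distinct [p, q, r] \<and> {p, q, r} \<subseteq> C)"
    then show ?thesis using small_clique_is_face[OF sc less.prems(2)] less.prems(3) by blast
  qed
qed

definition nbhd :: "'a set \<Rightarrow> ('a \<Rightarrow> 'a \<Rightarrow> bool) \<Rightarrow> 'a \<Rightarrow> 'a set" where
  "nbhd V adj u = {v \<in> V. adj u v}"

definition independent :: "('a \<Rightarrow> 'a \<Rightarrow> bool) \<Rightarrow> 'a set \<Rightarrow> bool" where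
  "independent adj I \<longleftrightarrow> (\<forall>p\<in>I. \<forall>q\<in>I. p \<noteq> q \<longrightarrow> \<not> adj p q)"

lemma independent_subset: "independent adj I \<Longrightarrow> J \<subseteq> I \<Longrightarrow> independent adj J"
  unfolding independent_def by blast

definition maximum_independent :: "('a \<Rightarrow> 'a \<Rightarrow> bool) \<Rightarrow> 'a set \<Rightarrow> 'a set \<Rightarrow> bool" where
  "maximum_independent adj T I \<longleftrightarrow> I \<subseteq> T \<and> independent adj I
     \<and> (\<forall>J. J \<subseteq> T \<and> independent adj J \<longrightarrow> card J \<le> card I)"

lemma maximum_independent_exists:
  assumes "finite T"
  obtains I where "maximum_independent adj T I"
proof -
  have "\<exists>I. (I \<subseteq> T \<and> independent adj I) \<and>
      (\<forall>J. J \<subseteq> T \<and> independent adj J \<longrightarrow> card J \<le> card I)"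
    using assms card_mono
    by (intro Lattices_Big.ex_has_greatest_nat[where k = "{}" and b = "Suc (card T)"])
      (auto simp: independent_def less_Suc_eq_le)
  then show ?thesis using that unfolding maximum_independent_def by blast
qed

locale clique_bounded_graph =
  fixes V :: "'a set" and adj :: "'a \<Rightarrow> 'a \<Rightarrow> bool" and d :: nat
  assumes finite_V: "finite V"
    and adj_sym: "adj u v \<Longrightarrow> adj v u"
    and clique_bound: "C \<subseteq> V \<Longrightarrow> (\<And>p q. p \<in> C \<Longrightarrow> q \<in> C \<Longrightarrow> p \<noteq> q \<Longrightarrow> adj p q) \<Longrightarrow> card C \<le> d"
    and common_nbhd_bound: "u \<noteq> w \<Longrightarrow> \<not> adj u w \<Longrightarrow> card (nbhd V adj u \<inter> nbhd V adj w) \<le> d"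
begin

lemma finite_nbhd: "finite (nbhd V adj u)"
  using finite_V unfolding nbhd_def by simp

(* Neighbourhoods of an independent set overlap little: inclusion-exclusion up to the
   pairwise intersections gives the degree sum bound. *)
lemma nbhd_sum_bound:
  assumes "finite J" "independent adj J"
  shows "(\<Sum>u\<in>J. card (nbhd V adj u)) \<le> card V + card J * card J * d"
proof -
  have "(\<Sum>u\<in>J. card (nbhd V adj u)) \<le> card (\<Union>u\<in>J. nbhd V adj u) + card J * card J * d"
    using assms
  proof (induction J rule: finite_induct)
    case empty
    then show ?case by simp
  next
    case (insert u J)
    let ?N = "nbhd V adj u" and ?U = "\<Union>w\<in>J. nbhd V adj w"
    have "card (?N \<inter> ?U) \<le> (\<Sum>w\<in>J. card (?N \<inter> nbhd V adj w))"
      unfolding Int_UN_distrib by (rule card_UN_le[OF insert.hyps(1)])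
    also have "\<dots> \<le> (\<Sum>w\<in>J. d)"
    proof (rule sum_mono)
      fix w assume "w \<in> J"
      then have "u \<noteq> w" "\<not> adj u w"
        using insert.hyps(2) insert.prems unfolding independent_def by auto
      then show "card (?N \<inter> nbhd V adj w) \<le> d" by (rule common_nbhd_bound)
    qed
    finally have overlap: "card (?N \<inter> ?U) \<le> card J * d" by simp
    have "card ?N + card ?U = card (?N \<union> ?U) + card (?N \<inter> ?U)"
      using finite_nbhd insert.hyps(1) by (intro card_Un_Int) auto
    moreover have "(\<Sum>u\<in>J. card (nbhd V adj u)) \<le> card ?U + card J * card J * d"
      using insert.IH insert.prems independent_subset by blast
    moreover have "card J * d + card J * card J * d \<le> Suc (card J) * Suc (card J) * d"
      by (simp add: algebra_simps)
    ultimately show ?case using insert.hyps overlap by simp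
  qed
  also have "card (\<Union>u\<in>J. nbhd V adj u) \<le> card V"
    using finite_V by (intro card_mono) (auto simp: nbhd_def)
  finally show ?thesis by simp
qed

lemma maximum_independent_dominates:
  assumes max: "maximum_independent adj T I" and t: "t \<in> T - I" and finT: "finite T"
  shows "\<exists>u\<in>I. adj t u"
proof (rule ccontr)
  assume "\<not> (\<exists>u\<in>I. adj t u)"
  then have "independent adj (insert t I)"
    using max adj_sym unfolding maximum_independent_def independent_def by blast
  then have "card (insert t I) \<le> card I"
    using max t unfolding maximum_independent_def by blast
  moreover have "finite I" using max finT unfolding maximum_independent_def by (auto intro: finite_subset)
  ultimately show False using t by simp
qed

(* A vertex outside a maximum independent set I whose only neighbour in I is u is a private
   neighbour of u.  Two non-adjacent private neighbours of u could replace u in I, contradicting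
   maximality; so the private neighbours of u form a clique and there are at most d of them. *)

lemma private_nbhd_bound:
  assumes T: "T \<subseteq> V" and max: "maximum_independent adj T I" and u: "u \<in> I"
  shows "card {t \<in> T - I. adj t u \<and> (\<forall>w\<in>I - {u}. \<not> adj t w)} \<le> d"
proof (rule clique_bound)
  let ?B = "{t \<in> T - I. adj t u \<and> (\<forall>w\<in>I - {u}. \<not> adj t w)}"
  have I: "I \<subseteq> T" "independent adj I" and finI: "finite I"
    using max T finite_V unfolding maximum_independent_def by (auto intro: finite_subset)
  show "?B \<subseteq> V" using T by blast
  fix p q assume pq: "p \<in> ?B" "q \<in> ?B" "p \<noteq> q"
  show "adj p q"
  proof (rule ccontr)
    assume "\<not> adj p q"
    then have "independent adj ({p, q} \<union> (I - {u}))"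
      using pq I(2) adj_sym unfolding independent_def by blast
    moreover have "{p, q} \<union> (I - {u}) \<subseteq> T" using pq I(1) by blast
    ultimately have "card ({p, q} \<union> (I - {u})) \<le> card I"
      using max unfolding maximum_independent_def by blast
    moreover have "card ({p, q} \<union> (I - {u})) = 2 + (card I - 1)"
      using pq finI u by (subst card_Un_disjoint) (auto simp: card_Diff_singleton)
    moreover have "card I \<ge> 1" using u finI by (simp add: Suc_le_eq card_gt_0_iff) blast
    ultimately show False by simp
  qed
qed

lemma pairwise_common_nbhd_bound:
  assumes finI: "finite I" and indep: "independent adj I"
  shows "card (\<Union>u\<in>I. \<Union>w\<in>I - {u}. nbhd V adj u \<inter> nbhd V adj w) \<le> card I * card I * d"
proof -
  have "card (\<Union>u\<in>I. \<Union>w\<in>I - {u}. nbhd V adj u \<inter> nbhd V adj w)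
      \<le> (\<Sum>u\<in>I. card (\<Union>w\<in>I - {u}. nbhd V adj u \<inter> nbhd V adj w))"
    by (rule card_UN_le[OF finI])
  also have "\<dots> \<le> (\<Sum>u\<in>I. \<Sum>w\<in>I - {u}. card (nbhd V adj u \<inter> nbhd V adj w))"
    using finI by (intro sum_mono card_UN_le) simp
  also have "\<dots> \<le> (\<Sum>u\<in>I. \<Sum>w\<in>I - {u}. d)"
  proof (intro sum_mono)
    fix u w assume "u \<in> I" "w \<in> I - {u}"
    then show "card (nbhd V adj u \<inter> nbhd V adj w) \<le> d"
      using indep unfolding independent_def by (intro common_nbhd_bound) auto
  qed
  also have "\<dots> \<le> (\<Sum>u\<in>I. card I * d)"
    by (intro sum_mono) (simp add: card_Diff1_le mult_le_mono1)
  finally show ?thesis by simp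
qed

(* Linear bound in d: every vertex of T lies in the maximum independent set I, in the common
   neighbourhood of two vertices of I (at most d each), or among the private neighbours of one
   vertex of I (at most d each). *)

lemma size_via_maximum_independent:
  assumes T: "T \<subseteq> V" and max: "maximum_independent adj T I"
  shows "card T \<le> card I + card I * card I * d + card I * d"
proof -
  have finT: "finite T" using T finite_V by (rule finite_subset)
  have I: "I \<subseteq> T" "independent adj I" and finI: "finite I"
    using max finT unfolding maximum_independent_def by (auto intro: finite_subset)
  define B where "B u = {t \<in> T - I. adj t u \<and> (\<forall>w\<in>I - {u}. \<not> adj t w)}" for u
  define Y where "Y = (\<Union>u\<in>I. \<Union>w\<in>I - {u}. nbhd V adj u \<inter> nbhd V adj w)"
  have cover: "T \<subseteq> I \<union> Y \<union> (\<Union>u\<in>I. B u)"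
  proof
    fix t assume t: "t \<in> T"
    show "t \<in> I \<union> Y \<union> (\<Union>u\<in>I. B u)"
    proof (cases "t \<in> I")
      case False
      then obtain u where u: "u \<in> I" "adj t u"
        using maximum_independent_dominates[OF max _ finT] t by blast
      show ?thesis
      proof (cases "\<exists>w\<in>I - {u}. adj t w")
        case True
        then obtain w where "w \<in> I - {u}" "adj t w" by blast
        then have "t \<in> nbhd V adj u \<inter> nbhd V adj w"
          using u t T adj_sym unfolding nbhd_def by auto
        then show ?thesis using u \<open>w \<in> I - {u}\<close> unfolding Y_def by blast
      next
        case False
        then show ?thesis using u t \<open>t \<notin> I\<close> unfolding B_def by blast
      qed
    qed simp
  qed
  have "card T \<le> card (I \<union> Y \<union> (\<Union>u\<in>I. B u))"
    using cover finI finT by (intro card_mono) (auto simp: Y_def B_def finite_nbhd)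
  also have "\<dots> \<le> card (I \<union> Y) + card (\<Union>u\<in>I. B u)" by (rule card_Un_le)
  finally have "card T \<le> card (I \<union> Y) + card (\<Union>u\<in>I. B u)" .
  moreover have "card (I \<union> Y) \<le> card I + card Y" by (rule card_Un_le)
  moreover have "card Y \<le> card I * card I * d"
    unfolding Y_def by (rule pairwise_common_nbhd_bound[OF finI I(2)])
  moreover have "card (\<Union>u\<in>I. B u) \<le> (\<Sum>u\<in>I. card (B u))" by (rule card_UN_le[OF finI])
  moreover have "(\<Sum>u\<in>I. card (B u)) \<le> card I * d"
    using private_nbhd_bound[OF T max] sum_bounded_above[of I "\<lambda>u. card (B u)" d]
    unfolding B_def by simp
  ultimately show ?thesis by linarith
qed

lemma independence_number_bound:
  assumes T: "T \<subseteq> V" and small: "\<And>J. J \<subseteq> T \<Longrightarrow> independent adj J \<Longrightarrow> card J < k"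
  shows "card T \<le> k + k * k * d"
proof -
  obtain I where max: "maximum_independent adj T I"
    using maximum_independent_exists T finite_V finite_subset by metis
  have r: "card I < k" using small max unfolding maximum_independent_def by blast
  have "card I * card I * d + card I * d = card I * (card I + 1) * d" by (simp add: algebra_simps)
  also have "\<dots> \<le> k * k * d" using r by (intro mult_le_mono) auto
  finally show ?thesis using size_via_maximum_independent[OF T max] r by linarith
qed

(* If k eps >= 2 and k^2 d < |V|, the vertices of degree >= eps |V| contain no independent
   set of size k (their neighbourhoods would cover more than the |V| + k^2 d available),
   hence there are at most k + k^2 d of them. *)
lemma few_high_degree_vertices:
  fixes \<epsilon> :: real
  assumes k\<epsilon>: "2 \<le> real k * \<epsilon>" and kd: "k * k * d < card V"
  shows "card {v \<in> V. \<epsilon> * card V \<le> card (nbhd V adj v)} \<le> k + k * k * d"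
proof (rule independence_number_bound)
  let ?n = "real (card V)"
  fix J assume J: "J \<subseteq> {v \<in> V. \<epsilon> * card V \<le> card (nbhd V adj v)}" "independent adj J"
  show "card J < k"
  proof (rule ccontr)
    assume "\<not> card J < k"
    then obtain J' where J': "J' \<subseteq> J" "card J' = k" "finite J'"
      by (meson obtain_subset_with_card_n not_less)
    have "2 * ?n \<le> real k * \<epsilon> * ?n" using k\<epsilon> by (intro mult_right_mono) auto
    also have "\<dots> = (\<Sum>u\<in>J'. \<epsilon> * ?n)" using J' by simp
    also have "\<dots> \<le> (\<Sum>u\<in>J'. real (card (nbhd V adj u)))" using J J' by (intro sum_mono) auto
    also have "\<dots> = real (\<Sum>u\<in>J'. card (nbhd V adj u))" by simp
    also have "\<dots> \<le> real (card V + k * k * d)"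
      using nbhd_sum_bound[OF J'(3) independent_subset[OF J(2) J'(1)]] unfolding J'(2)
      by (simp only: of_nat_le_iff)
    finally have "2 * ?n \<le> ?n + real (k * k * d)" by simp
    moreover have "real (k * k * d) < ?n" using kd by (simp only: of_nat_less_iff)
    ultimately show False by linarith
  qed
qed auto

(* A single vertex is a clique. *)
lemma clique_bound_positive: "V \<noteq> {} \<Longrightarrow> 1 \<le> d"
  using clique_bound[of "{v}" for v] by fastforce

end

definition skeleton_adj :: "nat set set \<Rightarrow> nat \<Rightarrow> nat \<Rightarrow> bool" where
  "skeleton_adj \<Gamma> u v \<longleftrightarrow> u \<noteq> v \<and> {u, v} \<in> \<Gamma>"

lemma finite_vertices: "simplicial_complex \<Gamma> \<Longrightarrow> finite (vertices \<Gamma>)"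
  unfolding simplicial_complex_def vertices_def by blast

lemma card_face_le: "simplicial_complex \<Gamma> \<Longrightarrow> F \<in> \<Gamma> \<Longrightarrow> card F \<le> max_face_card \<Gamma>"
  unfolding simplicial_complex_def max_face_card_def by (auto intro: Max_ge)

(* The 1-skeleton of a complex with 1-girth > 4 is clique-bounded by the maximal face size:
   cliques are faces, and the common neighbours of non-adjacent u, w form a clique since
   there is no induced 4-cycle. *)
lemma girth_complex_graph:
  fixes K :: "'k::field itself"
  assumes sc: "simplicial_complex \<Gamma>" and girth: "girth1 K \<Gamma> > 4"
  shows "clique_bounded_graph (vertices \<Gamma>) (skeleton_adj \<Gamma>) (max_face_card \<Gamma>)"
proof (unfold_locales)
  show finV: "finite (vertices \<Gamma>)" by (rule finite_vertices[OF sc])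
  show "skeleton_adj \<Gamma> v u" if "skeleton_adj \<Gamma> u v" for u v
    using that by (auto simp: skeleton_adj_def insert_commute)
  show clique: "card C \<le> max_face_card \<Gamma>"
    if C: "C \<subseteq> vertices \<Gamma>" "\<And>p q. p \<in> C \<Longrightarrow> q \<in> C \<Longrightarrow> p \<noteq> q \<Longrightarrow> skeleton_adj \<Gamma> p q" for C
  proof -
    have "finite C" using C(1) finV by (rule finite_subset)
    moreover have "{p, q} \<in> \<Gamma>" if "p \<in> C" "q \<in> C" "p \<noteq> q" for p q
      using C(2)[OF that] by (simp add: skeleton_adj_def)
    ultimately have "C \<in> \<Gamma>" using clique_is_face[OF sc girth_triangle_closed[OF girth]] C(1) by blast
    then show ?thesis by (rule card_face_le[OF sc])
  qed
  fix u w assume uw: "u \<noteq> w" "\<not> skeleton_adj \<Gamma> u w"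
  let ?N = "nbhd (vertices \<Gamma>) (skeleton_adj \<Gamma>)"
  show "card (?N u \<inter> ?N w) \<le> max_face_card \<Gamma>"
  proof (rule clique)
    show "?N u \<inter> ?N w \<subseteq> vertices \<Gamma>" by (auto simp: nbhd_def)
    fix p q assume "p \<in> ?N u \<inter> ?N w" "q \<in> ?N u \<inter> ?N w" "p \<noteq> q"
    then have "u \<noteq> p" "u \<noteq> q" "w \<noteq> p" "w \<noteq> q" "{u, p} \<in> \<Gamma>" "{w, p} \<in> \<Gamma>" "{w, q} \<in> \<Gamma>" "{u, q} \<in> \<Gamma>"
      by (simp_all add: nbhd_def skeleton_adj_def)
    then have "distinct [u, p, w, q]" "{u, p} \<in> \<Gamma>" "{p, w} \<in> \<Gamma>" "{w, q} \<in> \<Gamma>" "{q, u} \<in> \<Gamma>"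
      using uw(1) \<open>p \<noteq> q\<close> by (simp_all add: insert_commute)
    then have "{u, w} \<in> \<Gamma> \<or> {p, q} \<in> \<Gamma>" by (rule girth_no_induced_square[OF sc girth])
    then show "skeleton_adj \<Gamma> p q" using uw \<open>p \<noteq> q\<close> by (auto simp: skeleton_adj_def)
  qed
qed

(* Each edge at v is determined by its other endpoint. *)
lemma vdegree_le_nbhd:
  assumes sc: "simplicial_complex \<Gamma>"
  shows "vdegree \<Gamma> v \<le> card (nbhd (vertices \<Gamma>) (skeleton_adj \<Gamma>) v)"
proof -
  let ?N = "nbhd (vertices \<Gamma>) (skeleton_adj \<Gamma>) v"
  have fin: "finite ?N" using finite_vertices[OF sc] by (simp add: nbhd_def)
  have "{e \<in> \<Gamma>. card e = 2 \<and> v \<in> e} \<subseteq> (\<lambda>u. {v, u}) ` ?N"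
  proof
    fix e assume e: "e \<in> {e \<in> \<Gamma>. card e = 2 \<and> v \<in> e}"
    then obtain u where "e = {v, u}" "u \<noteq> v"
      by (auto simp: card_2_iff doubleton_eq_iff)
    moreover have "u \<in> ?N" using e \<open>e = {v, u}\<close> \<open>u \<noteq> v\<close>
      by (auto simp: nbhd_def skeleton_adj_def vertices_def)
    ultimately show "e \<in> (\<lambda>u. {v, u}) ` ?N" by blast
  qed
  then have "vdegree \<Gamma> v \<le> card ((\<lambda>u. {v, u}) ` ?N)"
    unfolding vdegree_def using fin by (intro card_mono) auto
  also have "\<dots> \<le> card ?N" by (rule card_image_le[OF fin])
  finally show ?thesis .
qed

lemma few_high_degree_vertices_of_girth:
  fixes K :: "'k::field itself" and \<epsilon> :: real
  assumes sc: "simplicial_complex \<Gamma>" and girth: "girth1 K \<Gamma> > 4"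
    and k\<epsilon>: "2 \<le> real k * \<epsilon>" and kd: "k * k * max_face_card \<Gamma> < card (vertices \<Gamma>)"
  shows "card {v \<in> vertices \<Gamma>. real (vdegree \<Gamma> v) \<ge> \<epsilon> * real (card (vertices \<Gamma>))}
      \<le> (k + k * k) * max_face_card \<Gamma>"
proof -
  interpret clique_bounded_graph "vertices \<Gamma>" "skeleton_adj \<Gamma>" "max_face_card \<Gamma>"
    by (rule girth_complex_graph[OF sc girth])
  let ?N = "nbhd (vertices \<Gamma>) (skeleton_adj \<Gamma>)" and ?n = "real (card (vertices \<Gamma>))"
  have "{v \<in> vertices \<Gamma>. real (vdegree \<Gamma> v) \<ge> \<epsilon> * ?n} \<subseteq> {v \<in> vertices \<Gamma>. \<epsilon> * ?n \<le> card (?N v)}"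
    using vdegree_le_nbhd[OF sc] by (auto intro: order_trans)
  then have "card {v \<in> vertices \<Gamma>. real (vdegree \<Gamma> v) \<ge> \<epsilon> * ?n}
      \<le> card {v \<in> vertices \<Gamma>. \<epsilon> * ?n \<le> card (?N v)}"
    using finite_V by (intro card_mono) auto
  also have "\<dots> \<le> k + k * k * max_face_card \<Gamma>" by (rule few_high_degree_vertices[OF k\<epsilon> kd])
  also have "\<dots> \<le> (k + k * k) * max_face_card \<Gamma>"
  proof -
    have "vertices \<Gamma> \<noteq> {}" using kd by auto
    then have "k \<le> k * max_face_card \<Gamma>" using clique_bound_positive by simp
    then show ?thesis by (simp add: distrib_right)
  qed
  finally show ?thesis .
qed

lemma high_degree_fraction_of_girth:
  fixes K :: "'k::field itself" and \<epsilon>1 \<epsilon>2 :: real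
  assumes sc: "simplicial_complex \<Gamma>" and girth: "girth1 K \<Gamma> > 4" and k\<epsilon>: "2 \<le> real k * \<epsilon>2"
    and dim: "real (max_face_card \<Gamma>)
      < min (\<epsilon>1 / real (k + k * k)) (1 / real (k * k)) * real (card (vertices \<Gamma>))"
  shows "real (card {v \<in> vertices \<Gamma>. real (vdegree \<Gamma> v) \<ge> \<epsilon>2 * real (card (vertices \<Gamma>))})
      \<le> \<epsilon>1 * real (card (vertices \<Gamma>))"
proof -
  define d n c q where "d = max_face_card \<Gamma>" and "n = card (vertices \<Gamma>)"
    and "c = real (k + k * k)" and "q = real (k * k)"
  define \<delta> where "\<delta> = min (\<epsilon>1 / c) (1 / q)"
  have k: "k \<ge> 1" using k\<epsilon> by (cases k) auto
  then have c: "c > 0" and q: "q > 0" unfolding c_def q_def of_nat_0_less_iff by simp_all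
  have "\<delta> \<le> 1 / q" "\<delta> \<le> \<epsilon>1 / c" by (simp_all add: \<delta>_def)
  then have \<delta>_q: "q * \<delta> \<le> 1" and \<delta>_c: "c * \<delta> \<le> \<epsilon>1"
    using c q by (simp_all add: pos_le_divide_eq mult.commute)
  have d: "real d < \<delta> * real n" using dim unfolding d_def n_def \<delta>_def c_def q_def .
  have "real (k * k * d) < q * (\<delta> * real n)"
    using mult_strict_left_mono[OF d q] by (simp add: q_def)
  also have "\<dots> \<le> real n" using mult_right_mono[OF \<delta>_q, of "real n"] by (simp add: mult.assoc)
  finally have "k * k * d < n" by (simp only: of_nat_less_iff)
  then have "real (card {v \<in> vertices \<Gamma>. real (vdegree \<Gamma> v) \<ge> \<epsilon>2 * real n}) \<le> real ((k + k * k) * d)"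
    using few_high_degree_vertices_of_girth[OF sc girth k\<epsilon>] unfolding d_def n_def
    by (simp only: of_nat_le_iff)
  also have "\<dots> = c * real d" by (simp add: c_def)
  also have "\<dots> \<le> (c * \<delta>) * real n"
    using mult_left_mono[OF less_imp_le[OF d], of c] c by (simp add: mult.assoc)
  also have "\<dots> \<le> \<epsilon>1 * real n" using \<delta>_c by (intro mult_right_mono) auto
  finally show ?thesis unfolding n_def .
qed

theorem mainTheorem6:
  fixes K :: "'k::field itself"
  shows "\<forall>\<epsilon>1 \<epsilon>2 :: real. \<epsilon>1 > 0 \<and> \<epsilon>2 > 0 \<longrightarrow>
    (\<exists>\<delta> :: real. \<delta> > 0 \<and>
      (\<forall>\<Gamma> d n. simplicial_complex \<Gamma> \<and> max_face_card \<Gamma> = d \<and> card (vertices \<Gamma>) = n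
          \<and> girth1 K \<Gamma> > 4 \<and> real d < \<delta> * real n \<longrightarrow>
          real (card {v \<in> vertices \<Gamma>. real (vdegree \<Gamma> v) \<ge> \<epsilon>2 * real n}) \<le> \<epsilon>1 * real n))"
proof (intro allI impI)
  fix \<epsilon>1 \<epsilon>2 :: real
  assume \<epsilon>: "\<epsilon>1 > 0 \<and> \<epsilon>2 > 0"
  define k where "k = nat \<lceil>2 / \<epsilon>2\<rceil>"
  have "2 / \<epsilon>2 \<le> real k" unfolding k_def by (rule real_nat_ceiling_ge)
  then have k\<epsilon>: "2 \<le> real k * \<epsilon>2" using \<epsilon> by (simp add: pos_divide_le_eq)
  then have "k \<ge> 1" by (cases k) auto
  then have c: "0 < real (k + k * k)" "0 < real (k * k)" unfolding of_nat_0_less_iff by simp_all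
  define \<delta> where "\<delta> = min (\<epsilon>1 / real (k + k * k)) (1 / real (k * k))"
  have "0 < \<epsilon>1 / real (k + k * k)" by (rule divide_pos_pos[OF _ c(1)]) (use \<epsilon> in simp)
  moreover have "0 < 1 / real (k * k)" by (rule divide_pos_pos[OF _ c(2)]) simp
  ultimately have "\<delta> > 0" unfolding \<delta>_def by (simp only: min_less_iff_conj)
  moreover have "real (card {v \<in> vertices \<Gamma>. real (vdegree \<Gamma> v) \<ge> \<epsilon>2 * real n}) \<le> \<epsilon>1 * real n"
    if "simplicial_complex \<Gamma> \<and> max_face_card \<Gamma> = d \<and> card (vertices \<Gamma>) = n
      \<and> girth1 K \<Gamma> > 4 \<and> real d < \<delta> * real n" for \<Gamma> d n
    using high_degree_fraction_of_girth[OF _ _ k\<epsilon>, of \<Gamma> K \<epsilon>1] that unfolding \<delta>_def by blast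
  ultimately show "\<exists>\<delta> :: real. \<delta> > 0 \<and>
      (\<forall>\<Gamma> d n. simplicial_complex \<Gamma> \<and> max_face_card \<Gamma> = d \<and> card (vertices \<Gamma>) = n
          \<and> girth1 K \<Gamma> > 4 \<and> real d < \<delta> * real n \<longrightarrow>
          real (card {v \<in> vertices \<Gamma>. real (vdegree \<Gamma> v) \<ge> \<epsilon>2 * real n}) \<le> \<epsilon>1 * real n)"
    by blast
qed

end
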